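(* Let $\lambda>0$ and let $\Omega_\lambda$ be the set of functions $f$ analytic in $\mathbb{D}=\{z:|z|<1\}$ with $f(0)=0$, $f'(0)=1$, such that $zf'(z)-f(z)=\lambda z^2\phi(z)$ for $z\in\mathbb{D}$ for some analytic $\phi$ in $\mathbb{D}$ with $|\phi(z)|\le1$. The radius of starlikeness of $\Omega_\lambda$ is $\frac{1}{2\lambda}$. Further, if $f\in\Omega_\lambda$, then for $z\in\mathbb{D}$, \[|z|-\lambda|z|^2\le|f(z)|\le|z|+\lambda|z|^2,\qquad 1-2\lambda|z|\le|f'(z)|\le1+2\lambda|z|.\] For $z\in\mathbb{D}$, $z\neq0$, equality occurs in both inequalities if and only if $f(z)=z+\lambda\eta z^2$ with $|\eta|=1$.
   Context: The radius of starlikeness of a class $E$ of normalized analytic functions on $\mathbb{D}$ is $\inf_{f\in E}\gamma_f$, where $\gamma_f$ is the largest $\gamma$ such that $f$ is starlike (i.e. $\mathrm{Re}(zf'(z)/f(z))>0$) in every disk $|z|<r$, $0<r\le\gamma$. *)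

theory Defs
  imports "HOL-Analysis.Analysis"
begin

definition Omega :: "real \<Rightarrow> (complex \<Rightarrow> complex) set" where
  "Omega lam = {f. f holomorphic_on ball 0 1 \<and> f 0 = 0 \<and> deriv f 0 = 1 \<and>
     (\<exists>\<phi>. \<phi> holomorphic_on ball 0 1 \<and> (\<forall>z\<in>ball 0 1. norm (\<phi> z) \<le> 1) \<and>
          (\<forall>z\<in>ball 0 1. z * deriv f z - f z = complex_of_real lam * z\<^sup>2 * \<phi> z))}"

text \<open>f is starlike in the disk of radius r: Re (z f'(z)/f(z)) > 0 for 0 < |z| < r
  (at z = 0 the quotient is 1 by normalization).\<close>
definition starlike_disk :: "(complex \<Rightarrow> complex) \<Rightarrow> real \<Rightarrow> bool" where
  "starlike_disk f r \<longleftrightarrow> (\<forall>z. 0 < norm z \<and> norm z < r \<longrightarrow> 0 < Re (z * deriv f z / f z))"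

definition starlike_radius_fun :: "(complex \<Rightarrow> complex) \<Rightarrow> real" where
  "starlike_radius_fun f = Sup {\<gamma>. 0 < \<gamma> \<and> \<gamma> \<le> 1 \<and> (\<forall>r. 0 < r \<and> r \<le> \<gamma> \<longrightarrow> starlike_disk f r)}"

definition radius_starlikeness :: "(complex \<Rightarrow> complex) set \<Rightarrow> real" where
  "radius_starlikeness E = Inf (starlike_radius_fun ` E)"

end

theory Submission
  imports Defs "HOL-Complex_Analysis.Complex_Analysis"
begin

(* Write f z = z * g z. The defining relation z f' - f = lam z^2 phi says exactly g' = lam phi,
   so h = (g - 1) / lam has h 0 = 0 and |h'| <= 1, whence |h z| <= |z|. Then
   f z = z (1 + lam h z) and f' z = 1 + lam h z + lam z phi z, and the growth and distortion
   bounds follow from the triangle inequality. Equality at some z <> 0 forces |h z| = |z|, so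
   h z = eta z by the equality case of Schwarz's lemma. For |z| < 1/(2 lam),
   z f'/f = 1 + lam z phi / (1 + lam h) with the fraction of modulus < 1, and the radius is
   attained by z - lam z^2, whose derivative vanishes at 1/(2 lam). *)

lemma starlike_disk_mono:
  assumes "starlike_disk f \<rho>" "r \<le> \<rho>"
  shows "starlike_disk f r"
  using assms unfolding starlike_disk_def by force

lemma starlike_radius_fun_ge:
  assumes "0 < \<rho>" "\<rho> \<le> 1" "starlike_disk f \<rho>"
  shows "\<rho> \<le> starlike_radius_fun f"
  unfolding starlike_radius_fun_def
  by (rule cSup_upper) (use assms starlike_disk_mono in \<open>auto intro: bdd_aboveI[of _ 1]\<close>)

lemma starlike_radius_fun_le:
  assumes "0 < \<rho>" "\<rho> \<le> 1" "starlike_disk f \<rho>"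
    and "z \<noteq> 0" "Re (z * deriv f z / f z) \<le> 0"
  shows "starlike_radius_fun f \<le> min 1 (norm z)"
  unfolding starlike_radius_fun_def
proof (rule cSup_least)
  show "{\<gamma>. 0 < \<gamma> \<and> \<gamma> \<le> 1 \<and> (\<forall>r. 0 < r \<and> r \<le> \<gamma> \<longrightarrow> starlike_disk f r)} \<noteq> {}"
    using assms(1-3) starlike_disk_mono by blast
  fix \<gamma> assume "\<gamma> \<in> {\<gamma>. 0 < \<gamma> \<and> \<gamma> \<le> 1 \<and> (\<forall>r. 0 < r \<and> r \<le> \<gamma> \<longrightarrow> starlike_disk f r)}"
  then have "\<gamma> \<le> 1" "starlike_disk f \<gamma>" by auto
  moreover have "\<not> norm z < \<gamma>"
    using \<open>starlike_disk f \<gamma>\<close> assms(4,5) by (auto simp: starlike_disk_def)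
  ultimately show "\<gamma> \<le> min 1 (norm z)" by auto
qed

lemma abs_norm_one_plus_minus_one_le:
  fixes a :: "'a::real_normed_algebra_1"
  shows "\<bar>norm (1 + a) - 1\<bar> \<le> norm a"
  using norm_triangle_ineq3[of "1 + a" 1] by simp

lemma holomorphic_factor_at_0:
  fixes f :: "complex \<Rightarrow> complex"
  assumes "f holomorphic_on ball 0 r" "f 0 = 0"
  obtains g where "g holomorphic_on ball 0 r" "g 0 = deriv f 0"
    "\<And>z. z \<in> ball 0 r \<Longrightarrow> f z = z * g z"
    "\<And>z. z \<in> ball 0 r \<Longrightarrow> deriv f z = g z + z * deriv g z"
proof -
  obtain g where holg: "g holomorphic_on ball 0 r" and fg: "\<And>z. norm z < r \<Longrightarrow> f z = z * g z"
    and "deriv f 0 = g 0"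
    using Schwarz3[OF assms] by blast
  moreover have "deriv f z = g z + z * deriv g z" if "z \<in> ball 0 r" for z
  proof -
    have "deriv f z = deriv (\<lambda>w. w * g w) z"
      using eventually_nhds_in_open[OF open_ball that] fg
      by (intro deriv_cong_ev) (auto elim!: eventually_mono)
    also have "\<dots> = g z + z * deriv g z"
      using holomorphic_derivI[OF holg open_ball that]
      by (intro DERIV_imp_deriv) (auto intro!: derivative_eq_intros)
    finally show ?thesis .
  qed
  ultimately show thesis
    using that by auto
qed

lemma Omega_representation:
  assumes "f \<in> Omega lam" "lam \<noteq> 0"
  obtains h \<phi> where "h holomorphic_on ball 0 1" "h 0 = 0"
    "\<And>z. z \<in> ball 0 1 \<Longrightarrow> norm (h z) \<le> norm z"
    "\<And>z. z \<in> ball 0 1 \<Longrightarrow> norm (\<phi> z) \<le> 1"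
    "\<And>z. z \<in> ball 0 1 \<Longrightarrow> f z = z * (1 + of_real lam * h z)"
    "\<And>z. z \<in> ball 0 1 \<Longrightarrow> deriv f z = 1 + of_real lam * h z + of_real lam * z * \<phi> z"
proof -
  obtain \<phi> where holf: "f holomorphic_on ball 0 1" and "f 0 = 0" "deriv f 0 = 1"
    and hol\<phi>: "\<phi> holomorphic_on ball 0 1" and \<phi>_le: "\<And>z. z \<in> ball 0 1 \<Longrightarrow> norm (\<phi> z) \<le> 1"
    and \<phi>_eq: "\<And>z. z \<in> ball 0 1 \<Longrightarrow> z * deriv f z - f z = of_real lam * z\<^sup>2 * \<phi> z"
    using assms(1) unfolding Omega_def by blast
  obtain g where holg: "g holomorphic_on ball 0 1" and "g 0 = 1"
    and fg: "\<And>z. z \<in> ball 0 1 \<Longrightarrow> f z = z * g z"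
    and dfg: "\<And>z. z \<in> ball 0 1 \<Longrightarrow> deriv f z = g z + z * deriv g z"
    using holomorphic_factor_at_0[OF holf \<open>f 0 = 0\<close>] \<open>deriv f 0 = 1\<close> by metis
  have dg: "deriv g z = of_real lam * \<phi> z" if "z \<in> ball 0 1" for z
  proof (rule analytic_continuation_open[of "ball 0 1 - {0}" "ball 0 1" "deriv g" "\<lambda>z. of_real lam * \<phi> z"])
    show "deriv g w = of_real lam * \<phi> w" if "w \<in> ball 0 1 - {0}" for w
    proof -
      have "w\<^sup>2 * deriv g w = w * deriv f w - f w"
        using fg[of w] dfg[of w] that by (simp add: algebra_simps power2_eq_square)
      also have "\<dots> = w\<^sup>2 * (of_real lam * \<phi> w)"
        using \<phi>_eq[of w] that by simp
      finally show ?thesis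
        using that by simp
    qed
    have "of_real (1/2) \<in> ball 0 1 - {0 :: complex}"
      by (simp add: dist_norm)
    then show "ball 0 1 - {0 :: complex} \<noteq> {}"
      by blast
    show "deriv g holomorphic_on ball 0 1"
      using holg by (rule holomorphic_deriv) simp
    show "(\<lambda>z. of_real lam * \<phi> z) holomorphic_on ball 0 1"
      using hol\<phi> by (intro holomorphic_intros)
  qed (use that in auto)
  define h where "h z = (g z - 1) / of_real lam" for z
  have g_h: "g z = 1 + of_real lam * h z" for z
    using assms(2) by (simp add: h_def)
  have dh: "(h has_field_derivative \<phi> z) (at z)" if "z \<in> ball 0 1" for z
    using holomorphic_derivI[OF holg open_ball that] dg[OF that] assms(2) unfolding h_def
    by (auto intro!: derivative_eq_intros)
  have "norm (h z) \<le> norm z" if "z \<in> ball 0 1" for z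
    using field_differentiable_bound[of "ball 0 1" h \<phi> 1 z 0, OF convex_ball
        has_field_derivative_at_within[OF dh] \<phi>_le that] \<open>g 0 = 1\<close>
    by (simp add: h_def)
  moreover have "f z = z * (1 + of_real lam * h z)" "deriv f z = 1 + of_real lam * h z + of_real lam * z * \<phi> z"
    if "z \<in> ball 0 1" for z
    using fg[OF that] dfg[OF that] dg[OF that] g_h[of z] by (simp_all add: algebra_simps)
  moreover have "h holomorphic_on ball 0 1"
    using holg assms(2) unfolding h_def by (intro holomorphic_intros) auto
  moreover have "h 0 = 0"
    using \<open>g 0 = 1\<close> by (simp add: h_def)
  ultimately show thesis
    using that \<phi>_le by blast
qed

lemma Omega_norm_deviation:
  assumes "f \<in> Omega lam" "0 < lam"
  obtains h where "h holomorphic_on ball 0 1" "h 0 = 0"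
    "\<And>z. z \<in> ball 0 1 \<Longrightarrow> norm (h z) \<le> norm z"
    "\<And>z. z \<in> ball 0 1 \<Longrightarrow> f z = z * (1 + of_real lam * h z)"
    "\<And>z. z \<in> ball 0 1 \<Longrightarrow> \<bar>norm (f z) - norm z\<bar> \<le> lam * norm z * norm (h z)"
    "\<And>z. z \<in> ball 0 1 \<Longrightarrow> \<bar>norm (deriv f z) - 1\<bar> \<le> lam * norm (h z) + lam * norm z"
proof -
  obtain h \<phi> where h: "h holomorphic_on ball 0 1" "h 0 = 0"
    "\<And>z. z \<in> ball 0 1 \<Longrightarrow> norm (h z) \<le> norm z"
    and \<phi>_le: "\<And>z. z \<in> ball 0 1 \<Longrightarrow> norm (\<phi> z) \<le> 1"
    and f_eq: "\<And>z. z \<in> ball 0 1 \<Longrightarrow> f z = z * (1 + of_real lam * h z)"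
    and df_eq: "\<And>z. z \<in> ball 0 1 \<Longrightarrow> deriv f z = 1 + of_real lam * h z + of_real lam * z * \<phi> z"
    using Omega_representation[OF assms(1)] assms(2) by (metis less_irrefl)
  have dev: "\<bar>norm (f z) - norm z\<bar> \<le> lam * norm z * norm (h z)" if "z \<in> ball 0 1" for z
  proof -
    have "norm (f z) - norm z = norm z * (norm (1 + of_real lam * h z) - 1)"
      using f_eq[OF that] by (simp add: norm_mult right_diff_distrib)
    then have "\<bar>norm (f z) - norm z\<bar> = norm z * \<bar>norm (1 + of_real lam * h z) - 1\<bar>"
      by (simp add: abs_mult)
    also have "\<dots> \<le> norm z * norm (of_real lam * h z)"
      by (intro mult_left_mono abs_norm_one_plus_minus_one_le) simp
    finally show ?thesis
      using assms(2) by (simp add: norm_mult mult.assoc mult.left_commute)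
  qed
  have dev': "\<bar>norm (deriv f z) - 1\<bar> \<le> lam * norm (h z) + lam * norm z" if "z \<in> ball 0 1" for z
  proof -
    have "\<bar>norm (deriv f z) - 1\<bar> \<le> norm (of_real lam * h z + of_real lam * z * \<phi> z)"
      using df_eq[OF that] abs_norm_one_plus_minus_one_le by (metis add.assoc)
    also have "\<dots> \<le> lam * norm (h z) + lam * norm z * norm (\<phi> z)"
      using norm_triangle_ineq[of "of_real lam * h z" "of_real lam * z * \<phi> z"] assms(2)
      by (simp add: norm_mult)
    also have "\<dots> \<le> lam * norm (h z) + lam * norm z"
      using \<phi>_le[OF that] assms(2) by (simp add: mult_left_le)
    finally show ?thesis .
  qed
  show thesis
    by (rule that[OF h f_eq dev dev'])
qed

lemma Omega_growth:
  assumes "f \<in> Omega lam" "0 < lam" "z \<in> ball 0 1"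
  shows "\<bar>norm (f z) - norm z\<bar> \<le> lam * (norm z)\<^sup>2"
    and "\<bar>norm (deriv f z) - 1\<bar> \<le> 2 * lam * norm z"
proof -
  obtain h where "h holomorphic_on ball 0 1" "h 0 = 0"
    and h_le: "\<And>z. z \<in> ball 0 1 \<Longrightarrow> norm (h z) \<le> norm z"
    and "\<And>z. z \<in> ball 0 1 \<Longrightarrow> f z = z * (1 + of_real lam * h z)"
    and dev: "\<And>z. z \<in> ball 0 1 \<Longrightarrow> \<bar>norm (f z) - norm z\<bar> \<le> lam * norm z * norm (h z)"
    and dev': "\<And>z. z \<in> ball 0 1 \<Longrightarrow> \<bar>norm (deriv f z) - 1\<bar> \<le> lam * norm (h z) + lam * norm z"
    by (rule Omega_norm_deviation[OF assms(1,2)]) (rule that)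
  note h_le[OF assms(3)] dev[OF assms(3)] dev'[OF assms(3)]
  moreover have "lam * norm z * norm (h z) \<le> lam * (norm z)\<^sup>2" "lam * norm (h z) \<le> lam * norm z"
    using \<open>norm (h z) \<le> norm z\<close> assms(2) by (simp_all add: power2_eq_square mult_left_mono)
  ultimately show "\<bar>norm (f z) - norm z\<bar> \<le> lam * (norm z)\<^sup>2" "\<bar>norm (deriv f z) - 1\<bar> \<le> 2 * lam * norm z"
    by linarith+
qed

lemma Omega_growth_equality:
  assumes "f \<in> Omega lam" "0 < lam" "z \<in> ball 0 1" "z \<noteq> 0"
    and "\<bar>norm (f z) - norm z\<bar> = lam * (norm z)\<^sup>2 \<or> \<bar>norm (deriv f z) - 1\<bar> = 2 * lam * norm z"
  obtains \<eta> where "norm \<eta> = 1" "\<And>w. w \<in> ball 0 1 \<Longrightarrow> f w = w + of_real lam * \<eta> * w\<^sup>2"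
proof -
  obtain h where holh: "h holomorphic_on ball 0 1" and "h 0 = 0"
    and h_le: "\<And>z. z \<in> ball 0 1 \<Longrightarrow> norm (h z) \<le> norm z"
    and f_eq: "\<And>z. z \<in> ball 0 1 \<Longrightarrow> f z = z * (1 + of_real lam * h z)"
    and dev: "\<And>z. z \<in> ball 0 1 \<Longrightarrow> \<bar>norm (f z) - norm z\<bar> \<le> lam * norm z * norm (h z)"
    and dev': "\<And>z. z \<in> ball 0 1 \<Longrightarrow> \<bar>norm (deriv f z) - 1\<bar> \<le> lam * norm (h z) + lam * norm z"
    by (rule Omega_norm_deviation[OF assms(1,2)]) (rule that)
  with assms(2,4,5) dev[OF assms(3)] dev'[OF assms(3)] have "lam * norm z * norm z \<le> lam * norm z * norm (h z)"
    by (auto simp: power2_eq_square)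
  with assms(2,4) have "norm (h z) = norm z"
    using h_le[OF assms(3)] by (simp add: mult_le_cancel_left_pos)
  then obtain \<alpha> where \<alpha>: "\<And>w. norm w < 1 \<Longrightarrow> h w = \<alpha> * w" "norm \<alpha> = 1"
    using Schwarz_Lemma(3)[OF holh \<open>h 0 = 0\<close>, of 0] h_le assms(3,4) by fastforce
  show thesis
  proof (rule that[OF \<alpha>(2)])
    show "f w = w + of_real lam * \<alpha> * w\<^sup>2" if "w \<in> ball 0 1" for w
      using f_eq[OF that] \<alpha>(1)[of w] that by (simp add: algebra_simps power2_eq_square)
  qed
qed

lemma Omega_starlike_disk:
  assumes "f \<in> Omega lam" "0 < lam"
  shows "starlike_disk f (min 1 (1 / (2 * lam)))"
  unfolding starlike_disk_def
proof (intro allI impI)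
  fix z :: complex
  assume z: "0 < norm z \<and> norm z < min 1 (1 / (2 * lam))"
  then have "z \<in> ball 0 1" and small: "lam * norm z < 1/2"
    using assms(2) by (auto simp: field_simps)
  obtain h \<phi> where "\<And>z. z \<in> ball 0 1 \<Longrightarrow> norm (h z) \<le> norm z"
    and "\<And>z. z \<in> ball 0 1 \<Longrightarrow> norm (\<phi> z) \<le> 1"
    and "\<And>z. z \<in> ball 0 1 \<Longrightarrow> f z = z * (1 + of_real lam * h z)"
    and "\<And>z. z \<in> ball 0 1 \<Longrightarrow> deriv f z = 1 + of_real lam * h z + of_real lam * z * \<phi> z"
    using Omega_representation[OF assms(1)] assms(2) by (metis less_irrefl)
  then have h: "norm (h z) \<le> norm z" and \<phi>: "norm (\<phi> z) \<le> 1"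
    and f_eq: "f z = z * (1 + of_real lam * h z)"
    and df_eq: "deriv f z = 1 + of_real lam * h z + of_real lam * z * \<phi> z"
    using \<open>z \<in> ball 0 1\<close> by auto
  define a b where "a = of_real lam * h z" and "b = of_real lam * z * \<phi> z"
  have "norm a \<le> lam * norm z" "norm b \<le> lam * norm z"
    using h \<phi> assms(2) by (auto simp: a_def b_def norm_mult mult_left_le mult_left_mono)
  moreover have "1 - norm a \<le> norm (1 + a)"
    using abs_norm_one_plus_minus_one_le[of a] by linarith
  ultimately have "norm b < norm (1 + a)"
    using small by linarith
  then have "norm (b / (1 + a)) < 1" and "1 + a \<noteq> 0"
    by (auto simp: norm_divide divide_less_eq)
  have "z * deriv f z / f z = (1 + a + b) / (1 + a)"
    using f_eq df_eq z unfolding a_def b_def by simp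
  also have "\<dots> = 1 + b / (1 + a)"
    using \<open>1 + a \<noteq> 0\<close> by (simp add: field_simps)
  finally show "0 < Re (z * deriv f z / f z)"
    using abs_Re_le_cmod[of "b / (1 + a)"] \<open>norm (b / (1 + a)) < 1\<close> by simp
qed

lemma deriv_quadratic: "deriv (\<lambda>w. w + c * w\<^sup>2) z = 1 + 2 * c * (z :: complex)"
  by (rule DERIV_imp_deriv) (auto intro!: derivative_eq_intros)

lemma quadratic_in_Omega:
  assumes "norm \<eta> \<le> 1"
  shows "(\<lambda>w. w + of_real lam * \<eta> * w\<^sup>2) \<in> Omega lam"
  unfolding Omega_def
proof (intro CollectI conjI exI[of _ "\<lambda>_. \<eta>"])
  show "(\<lambda>w. w + of_real lam * \<eta> * w\<^sup>2) holomorphic_on ball 0 1"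
    by (intro holomorphic_intros)
  show "\<forall>z\<in>ball 0 1. z * deriv (\<lambda>w. w + of_real lam * \<eta> * w\<^sup>2) z - (z + of_real lam * \<eta> * z\<^sup>2)
      = of_real lam * z\<^sup>2 * \<eta>"
    by (simp only: deriv_quadratic) (simp add: algebra_simps power2_eq_square)
qed (use assms in \<open>simp_all add: deriv_quadratic\<close>)

lemma quadratic_extremal:
  fixes z :: complex
  assumes "z \<noteq> 0" "0 \<le> lam"
  obtains \<eta> where "norm \<eta> = 1"
    "norm (z + of_real lam * \<eta> * z\<^sup>2) = norm z + lam * (norm z)\<^sup>2"
    "norm (deriv (\<lambda>w. w + of_real lam * \<eta> * w\<^sup>2) z) = 1 + 2 * lam * norm z"
proof
  define \<eta> where "\<eta> = cnj z / of_real (norm z)"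
  show "norm \<eta> = 1"
    using assms(1) by (simp add: \<eta>_def norm_divide)
  have "\<eta> * z = z * cnj z / of_real (norm z)"
    by (simp add: \<eta>_def ac_simps)
  also have "\<dots> = of_real (norm z)"
    using assms(1) by (simp add: power2_eq_square flip: complex_norm_square)
  finally have \<eta>z: "\<eta> * z = of_real (norm z)" .
  have "z + of_real lam * \<eta> * z\<^sup>2 = z * of_real (1 + lam * norm z)"
    using \<eta>z by (simp add: power2_eq_square algebra_simps)
  also have "norm \<dots> = norm z + lam * (norm z)\<^sup>2"
    unfolding norm_mult norm_of_real using assms(2) by (simp add: power2_eq_square distrib_left)
  finally show "norm (z + of_real lam * \<eta> * z\<^sup>2) = norm z + lam * (norm z)\<^sup>2" .
  have "deriv (\<lambda>w. w + of_real lam * \<eta> * w\<^sup>2) z = 1 + 2 * (of_real lam * \<eta>) * z"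
    by (rule deriv_quadratic)
  also have "\<dots> = of_real (1 + 2 * lam * norm z)"
    using \<eta>z by (simp add: algebra_simps)
  also have "norm \<dots> = 1 + 2 * lam * norm z"
    unfolding norm_of_real using assms(2) by simp
  finally show "norm (deriv (\<lambda>w. w + of_real lam * \<eta> * w\<^sup>2) z) = 1 + 2 * lam * norm z" .
qed

lemma starlike_radius_fun_Omega:
  assumes "f \<in> Omega lam" "0 < lam"
  shows "min 1 (1 / (2 * lam)) \<le> starlike_radius_fun f"
  using starlike_radius_fun_ge[OF _ _ Omega_starlike_disk[OF assms]] assms(2) by simp

lemma radius_starlikeness_Omega:
  assumes "0 < lam"
  shows "radius_starlikeness (Omega lam) = min 1 (1 / (2 * lam))"
  unfolding radius_starlikeness_def
proof (rule cInf_eq_minimum)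
  define k :: "complex \<Rightarrow> complex" where "k = (\<lambda>w. w + of_real lam * (-1) * w\<^sup>2)"
  define z where "z = complex_of_real (1 / (2 * lam))"
  have k: "k \<in> Omega lam"
    unfolding k_def by (rule quadratic_in_Omega) simp
  have "deriv k z = 0"
    unfolding k_def deriv_quadratic z_def using assms by simp
  then have "z \<noteq> 0" "Re (z * deriv k z / k z) \<le> 0"
    using assms by (simp_all add: z_def)
  then have "starlike_radius_fun k \<le> min 1 (norm z)"
    by (intro starlike_radius_fun_le[OF _ _ Omega_starlike_disk[OF k assms]]) (use assms in auto)
  moreover have "norm z = 1 / (2 * lam)"
    unfolding z_def norm_of_real using assms by simp
  ultimately have "starlike_radius_fun k = min 1 (1 / (2 * lam))"
    using starlike_radius_fun_Omega[OF k assms] by linarith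
  then show "min 1 (1 / (2 * lam)) \<in> starlike_radius_fun ` Omega lam"
    using k by (metis image_eqI)
qed (use starlike_radius_fun_Omega assms in blast)

theorem theorem4p1:
  fixes lam :: real
  assumes "0 < lam"
  shows "radius_starlikeness (Omega lam) = min 1 (1 / (2 * lam)) \<and>
    (\<forall>f\<in>Omega lam. \<forall>z\<in>ball 0 1.
       norm z - lam * (norm z)\<^sup>2 \<le> norm (f z) \<and> norm (f z) \<le> norm z + lam * (norm z)\<^sup>2 \<and>
       1 - 2 * lam * norm z \<le> norm (deriv f z) \<and> norm (deriv f z) \<le> 1 + 2 * lam * norm z) \<and>
    (\<forall>f\<in>Omega lam. \<forall>z\<in>ball 0 1. z \<noteq> 0 \<longrightarrow>
       (norm (f z) = norm z - lam * (norm z)\<^sup>2 \<or> norm (f z) = norm z + lam * (norm z)\<^sup>2 \<or>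
        norm (deriv f z) = 1 - 2 * lam * norm z \<or> norm (deriv f z) = 1 + 2 * lam * norm z) \<longrightarrow>
       (\<exists>\<eta>. norm \<eta> = 1 \<and> (\<forall>w\<in>ball 0 1. f w = w + complex_of_real lam * \<eta> * w\<^sup>2))) \<and>
    (\<forall>z\<in>ball 0 1. z \<noteq> 0 \<longrightarrow>
       (\<exists>\<eta>. norm \<eta> = 1 \<and> (\<lambda>w. w + complex_of_real lam * \<eta> * w\<^sup>2) \<in> Omega lam \<and>
          norm (z + complex_of_real lam * \<eta> * z\<^sup>2) = norm z + lam * (norm z)\<^sup>2 \<and>
          norm (deriv (\<lambda>w. w + complex_of_real lam * \<eta> * w\<^sup>2) z) = 1 + 2 * lam * norm z))"
proof (intro conjI ballI impI)
  show "radius_starlikeness (Omega lam) = min 1 (1 / (2 * lam))"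
    by (rule radius_starlikeness_Omega[OF assms])
next
  fix f :: "complex \<Rightarrow> complex" and z :: complex
  assume "f \<in> Omega lam" "z \<in> ball 0 1"
  note bounds = Omega_growth[OF this(1) assms this(2)]
  then show "norm z - lam * (norm z)\<^sup>2 \<le> norm (f z)" "norm (f z) \<le> norm z + lam * (norm z)\<^sup>2"
    "1 - 2 * lam * norm z \<le> norm (deriv f z)" "norm (deriv f z) \<le> 1 + 2 * lam * norm z"
    by linarith+
next
  fix f :: "complex \<Rightarrow> complex" and z :: complex
  assume "f \<in> Omega lam" "z \<in> ball 0 1" "z \<noteq> 0"
    and "norm (f z) = norm z - lam * (norm z)\<^sup>2 \<or> norm (f z) = norm z + lam * (norm z)\<^sup>2 \<or>
      norm (deriv f z) = 1 - 2 * lam * norm z \<or> norm (deriv f z) = 1 + 2 * lam * norm z"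
  then have "\<bar>norm (f z) - norm z\<bar> = lam * (norm z)\<^sup>2 \<or> \<bar>norm (deriv f z) - 1\<bar> = 2 * lam * norm z"
    using assms by auto
  then obtain \<eta> where "norm \<eta> = 1" "\<And>w. w \<in> ball 0 1 \<Longrightarrow> f w = w + of_real lam * \<eta> * w\<^sup>2"
    by (rule Omega_growth_equality[OF \<open>f \<in> Omega lam\<close> assms \<open>z \<in> ball 0 1\<close> \<open>z \<noteq> 0\<close>]) (rule that)
  then show "\<exists>\<eta>. norm \<eta> = 1 \<and> (\<forall>w\<in>ball 0 1. f w = w + complex_of_real lam * \<eta> * w\<^sup>2)"
    by blast
next
  fix z :: complex
  assume "z \<in> ball 0 1" "z \<noteq> 0"
  obtain \<eta> where "norm \<eta> = 1"
    "norm (z + of_real lam * \<eta> * z\<^sup>2) = norm z + lam * (norm z)\<^sup>2"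
    "norm (deriv (\<lambda>w. w + of_real lam * \<eta> * w\<^sup>2) z) = 1 + 2 * lam * norm z"
    by (rule quadratic_extremal[OF \<open>z \<noteq> 0\<close> less_imp_le[OF assms]]) (rule that)
  then show "\<exists>\<eta>. norm \<eta> = 1 \<and> (\<lambda>w. w + complex_of_real lam * \<eta> * w\<^sup>2) \<in> Omega lam \<and>
      norm (z + complex_of_real lam * \<eta> * z\<^sup>2) = norm z + lam * (norm z)\<^sup>2 \<and>
      norm (deriv (\<lambda>w. w + complex_of_real lam * \<eta> * w\<^sup>2) z) = 1 + 2 * lam * norm z"
    using quadratic_in_Omega[of \<eta> lam] by auto
qed

end
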